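(* For every positive integer $n$, $\chi_{\mu_2}(Q_n)\le \gamma(Q_n)$.
   Context: $Q_n$ is the $n$-dimensional hypercube: vertices are binary $n$-tuples, two being adjacent iff they differ in exactly one coordinate. $\gamma(G)$ is the domination number: the minimum size of a set $D$ such that every vertex outside $D$ has a neighbor in $D$. A set $M\subseteq V(G)$ is a $2$-distance mutual-visibility set if for every two vertices $u,v\in M$ there exists a shortest $u,v$-path of length at most $2$ none of whose internal vertices lies in $M$. $\chi_{\mu_2}(G)$ is the minimum cardinality of a partition of $V(G)$ into $2$-distance mutual-visibility sets. *)

theory Defs
  imports Main
begin

definition dominating_set :: "'a set \<Rightarrow> ('a \<Rightarrow> 'a \<Rightarrow> bool) \<Rightarrow> 'a set \<Rightarrow> bool" where
  "dominating_set V E D \<longleftrightarrow> D \<subseteq> V \<and> (\<forall>v\<in>V - D. \<exists>d\<in>D. E v d)"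

definition domination_number :: "'a set \<Rightarrow> ('a \<Rightarrow> 'a \<Rightarrow> bool) \<Rightarrow> nat" where
  "domination_number V E = (LEAST k. \<exists>D. dominating_set V E D \<and> card D = k)"

text \<open>For distinct u, v: a shortest u,v-path of length at most 2 with no internal vertex in M
  exists iff u, v are adjacent (length 1, no internal vertex), or they are non-adjacent and have a
  common neighbour outside M (then the distance is exactly 2). For u = v the trivial path works.\<close>
definition two_dist_mv_set :: "'a set \<Rightarrow> ('a \<Rightarrow> 'a \<Rightarrow> bool) \<Rightarrow> 'a set \<Rightarrow> bool" where
  "two_dist_mv_set V E M \<longleftrightarrow> M \<subseteq> V \<and>
     (\<forall>u\<in>M. \<forall>v\<in>M. u \<noteq> v \<longrightarrow>
        (E u v \<or> (\<exists>w\<in>V - M. E u w \<and> E w v)))"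

definition is_partition :: "'a set \<Rightarrow> 'a set set \<Rightarrow> bool" where
  "is_partition V P \<longleftrightarrow> \<Union>P = V \<and> {} \<notin> P \<and>
     (\<forall>A\<in>P. \<forall>B\<in>P. A \<noteq> B \<longrightarrow> A \<inter> B = {})"

definition chi_mu2 :: "'a set \<Rightarrow> ('a \<Rightarrow> 'a \<Rightarrow> bool) \<Rightarrow> nat" where
  "chi_mu2 V E = (LEAST k. \<exists>P. is_partition V P \<and> finite P \<and>
      (\<forall>M\<in>P. two_dist_mv_set V E M) \<and> card P = k)"

text \<open>The hypercube Q_n: a binary n-tuple is identified with its support, a subset of {0..<n};
  two tuples differ in exactly one coordinate iff their supports have symmetric difference of size 1.\<close>
definition hypercube_V :: "nat \<Rightarrow> nat set set" where
  "hypercube_V n = Pow {0..<n}"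

definition hypercube_E :: "nat set \<Rightarrow> nat set \<Rightarrow> bool" where
  "hypercube_E x y \<longleftrightarrow> card ((x - y) \<union> (y - x)) = 1"

end

theory Submission
  imports Defs
begin

text \<open>Choosing for every vertex a dominating vertex in its closed neighbourhood partitions the
  vertex set into at most \<open>\<gamma>\<close> classes, each inside the closed neighbourhood of one dominating
  vertex. In \<open>Q\<^sub>n\<close> every such set is a 2-distance mutual-visibility set: two distinct
  neighbours \<open>d \<oplus> e\<^sub>i\<close>, \<open>d \<oplus> e\<^sub>j\<close> of \<open>d\<close> are not adjacent, but their second common
  neighbour \<open>d \<oplus> e\<^sub>i \<oplus> e\<^sub>j\<close> lies at distance 2 from \<open>d\<close>, hence outside the class.\<close>

definition closed_nbhd :: "'a set \<Rightarrow> ('a \<Rightarrow> 'a \<Rightarrow> bool) \<Rightarrow> 'a \<Rightarrow> 'a set" where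
  "closed_nbhd V E d = {v \<in> V. v = d \<or> E v d}"

lemma chi_mu2_le_card_partition:
  assumes "is_partition V P" and "finite P" and "\<forall>M\<in>P. two_dist_mv_set V E M"
  shows "chi_mu2 V E \<le> card P"
  unfolding chi_mu2_def by (rule Least_le) (use assms in blast)

lemma domination_number_attained:
  assumes "finite V"
  obtains D where "dominating_set V E D" and "card D = domination_number V E"
proof -
  have "dominating_set V E V" by (simp add: dominating_set_def)
  then show thesis
    using LeastI_ex[of "\<lambda>k. \<exists>D. dominating_set V E D \<and> card D = k"] that
    unfolding domination_number_def by blast
qed

lemma partition_into_closed_nbhds:
  assumes D: "dominating_set V E D" and "finite D"
  obtains P where "is_partition V P" and "finite P" and "card P \<le> card D"
    and "\<forall>M\<in>P. \<exists>d\<in>D. M \<subseteq> closed_nbhd V E d"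
proof -
  define f where "f v = (if v \<in> D then v else (SOME d. d \<in> D \<and> E v d))" for v
  have f: "f v \<in> D \<and> (v = f v \<or> E v (f v))" if "v \<in> V" for v
  proof (cases "v \<in> D")
    case False
    then have "\<exists>d. d \<in> D \<and> E v d" using D that by (auto simp: dominating_set_def)
    from someI_ex[OF this] show ?thesis using False by (simp add: f_def)
  qed (simp add: f_def)
  define C where "C d = {v \<in> V. f v = d}" for d
  have C_nonempty: "d \<in> C d" if "d \<in> D" for d
    using that D by (auto simp: C_def f_def dominating_set_def)
  have "is_partition V (C ` D)"
    unfolding is_partition_def
  proof (intro conjI ballI impI)
    show "\<Union>(C ` D) = V"
      using f by (auto simp: C_def)
    show "{} \<notin> C ` D"
      using C_nonempty by auto
  qed (auto simp: C_def)
  moreover have "C d \<subseteq> closed_nbhd V E d" for d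
    using f by (auto simp: C_def closed_nbhd_def)
  ultimately show thesis
    using that \<open>finite D\<close> card_image_le by blast
qed

lemma chi_mu2_le_domination_number:
  assumes "finite V"
    and "\<And>d M. d \<in> V \<Longrightarrow> M \<subseteq> closed_nbhd V E d \<Longrightarrow> two_dist_mv_set V E M"
  shows "chi_mu2 V E \<le> domination_number V E"
proof -
  obtain D where D: "dominating_set V E D" and card_D: "card D = domination_number V E"
    using domination_number_attained[OF \<open>finite V\<close>] .
  have "D \<subseteq> V" using D by (simp add: dominating_set_def)
  then have "finite D" using \<open>finite V\<close> finite_subset by blast
  then obtain P where "is_partition V P" "finite P" "card P \<le> card D"
    and P_nbhd: "\<forall>M\<in>P. \<exists>d\<in>D. M \<subseteq> closed_nbhd V E d"
    using partition_into_closed_nbhds[OF D] by metis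
  moreover have "\<forall>M\<in>P. two_dist_mv_set V E M"
    using P_nbhd \<open>D \<subseteq> V\<close> assms(2) by blast
  ultimately show ?thesis
    using chi_mu2_le_card_partition card_D by fastforce
qed

definition flip :: "nat \<Rightarrow> nat set \<Rightarrow> nat set" where
  "flip i x = sym_diff x {i}"

lemma flip_flip [simp]: "flip i (flip i x) = x"
  unfolding flip_def by blast

lemma flip_commute: "flip i (flip j x) = flip j (flip i x)"
  unfolding flip_def by blast

lemma flip_in_hypercube_V_iff:
  assumes "x \<in> hypercube_V n"
  shows "flip i x \<in> hypercube_V n \<longleftrightarrow> i < n"
  using assms unfolding flip_def hypercube_V_def by (cases "i \<in> x") auto

lemma hypercube_E_iff_flip: "hypercube_E x y \<longleftrightarrow> (\<exists>i. y = flip i x)"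
proof -
  have "sym_diff x y = {i} \<longleftrightarrow> y = flip i x" for i
    unfolding flip_def by blast
  then show ?thesis
    unfolding hypercube_E_def One_nat_def card_1_singleton_iff by (rule ex_cong1)
qed

lemma hypercube_E_sym: "hypercube_E x y \<longleftrightarrow> hypercube_E y x"
  unfolding hypercube_E_def by (simp add: Un_commute)

lemma not_hypercube_E_flip_flip:
  assumes "i \<noteq> j"
  shows "\<not> hypercube_E x (flip i (flip j x))"
proof -
  have "sym_diff x (flip i (flip j x)) = {i, j}"
    using assms unfolding flip_def by blast
  then show ?thesis
    using assms by (simp add: hypercube_E_def)
qed

lemma hypercube_two_dist_mv_set_in_closed_nbhd:
  assumes d: "d \<in> hypercube_V n"
    and M: "M \<subseteq> closed_nbhd (hypercube_V n) hypercube_E d"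
  shows "two_dist_mv_set (hypercube_V n) hypercube_E M"
  unfolding two_dist_mv_set_def
proof (intro conjI ballI impI)
  show M_V: "M \<subseteq> hypercube_V n"
    using M by (auto simp: closed_nbhd_def)
  fix u v assume u: "u \<in> M" and v: "v \<in> M" and "u \<noteq> v"
  show "hypercube_E u v \<or> (\<exists>w\<in>hypercube_V n - M. hypercube_E u w \<and> hypercube_E w v)"
  proof (cases "u = d \<or> v = d")
    case True
    then show ?thesis
      using M u v \<open>u \<noteq> v\<close> hypercube_E_sym by (auto simp: closed_nbhd_def)
  next
    case False
    then have "hypercube_E d u" "hypercube_E d v"
      using M u v hypercube_E_sym by (auto simp: closed_nbhd_def)
    then obtain i j where u_def: "u = flip i d" and v_def: "v = flip j d"
      by (auto simp: hypercube_E_iff_flip)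
    have "i \<noteq> j" using \<open>u \<noteq> v\<close> u_def v_def by blast
    define w where "w = flip i (flip j d)"
    have "w \<noteq> d"
      using \<open>i \<noteq> j\<close> unfolding w_def flip_def by blast
    have "j < n"
      using flip_in_hypercube_V_iff[OF d] v M_V v_def by blast
    then have "w \<in> hypercube_V n"
      using flip_in_hypercube_V_iff u M_V unfolding w_def u_def flip_commute[of i] by blast
    moreover have "w \<notin> M"
      using M \<open>w \<noteq> d\<close> not_hypercube_E_flip_flip[OF \<open>i \<noteq> j\<close>, of d] hypercube_E_sym
      by (auto simp: closed_nbhd_def w_def)
    moreover have "hypercube_E u w"
      unfolding hypercube_E_iff_flip u_def w_def by (metis flip_commute)
    moreover have "hypercube_E w v"
      unfolding hypercube_E_iff_flip v_def w_def by (metis flip_flip)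
    ultimately show ?thesis by blast
  qed
qed

theorem proposition6p3:
  fixes n :: nat
  assumes "n \<ge> 1"
  shows "chi_mu2 (hypercube_V n) hypercube_E \<le> domination_number (hypercube_V n) hypercube_E"
  by (rule chi_mu2_le_domination_number[OF _ hypercube_two_dist_mv_set_in_closed_nbhd])
    (simp add: hypercube_V_def)

end
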